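(* Let $n\ge 2$ and let $k_1,\dots,k_n$, $a_1,\dots,a_{n-1}$, $b_1,\dots,b_n$ be real or complex numbers ($3n-1$ parameters). Let $A_2$ be the $n\times n$ matrix with entries $$(A_2)_{ij}=\begin{cases} k_j b_j, & i\le j,\\ k_i a_j, & i>j.\end{cases}$$ Define $c_i=k_ib_i-k_{i+1}a_i$ for $i=1,\dots,n-1$, $c_0=1$, $c_n=b_n$; $d_i=k_ia_{i+1}b_i-k_{i+1}a_ib_{i+1}$ for $i=1,\dots,n-2$, $d_0=a_1$; $f_i=a_i-b_i$ for $i=2,\dots,n-1$; $g_i=k_i-k_{i+1}$ for $i=2,\dots,n-1$, $g_n=1$. Assume $k_n\neq 0$ and $c_i\neq 0$ for $i=1,\dots,n$. Then $A_2$ is invertible and its inverse $A_2^{-1}=[\alpha_{ij}]$ is the lower Hessenberg matrix with entries $$\alpha_{ij}=\begin{cases} \dfrac{k_{i-1}b_{i-1}-k_{i+1}a_{i-1}}{c_{i-1}c_i}, & i=j,\ i\neq 1,n,\\[2mm] \dfrac{1}{c_1}, & i=j=1,\\[2mm] \dfrac{k_{n-1}b_{n-1}}{k_nc_{n-1}c_n}, & i=j=n,\\[2mm] (-1)^{i+j}\dfrac{d_{j-1}\,g_i\prod_{\nu=j+1}^{i-1}k_\nu f_\nu}{\prod_{\nu=j-1}^{i}c_\nu}, & i-j\ge 1,\\[2mm] -\dfrac{1}{c_i}, & j-i=1,\\[2mm] 0, & j-i>1, \end{cases}$$ where the empty product $\prod_{\nu=j+1}^{i-1}k_\nu f_\nu$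 (case $i=j+1$) is taken to be $1$.
   Context: A lower Hessenberg matrix is a square matrix whose entries $(i,j)$ vanish whenever $j-i>1$. *)

theory Defs
  imports "Jordan_Normal_Form.Matrix"
begin

(* Parameters are 1-indexed functions nat => 'a (k i, a i, b i for i = 1..n);
   matrices are JNF matrices with 0-based indices, so entry (i,j) of the paper
   is the JNF entry (i-1, j-1). *)

definition lower_hessenberg :: "'a::zero mat \<Rightarrow> bool" where
  "lower_hessenberg M \<longleftrightarrow> square_mat M \<and>
     (\<forall>i < dim_row M. \<forall>j < dim_col M. j > i + 1 \<longrightarrow> M $$ (i, j) = 0)"

definition A2 :: "nat \<Rightarrow> (nat \<Rightarrow> 'a::field) \<Rightarrow> (nat \<Rightarrow> 'a) \<Rightarrow> (nat \<Rightarrow> 'a) \<Rightarrow> 'a mat" where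
  "A2 n k a b = mat n n (\<lambda>(i0, j0). let i = i0 + 1; j = j0 + 1 in
       if i \<le> j then k j * b j else k i * a j)"

definition cc :: "nat \<Rightarrow> (nat \<Rightarrow> 'a::field) \<Rightarrow> (nat \<Rightarrow> 'a) \<Rightarrow> (nat \<Rightarrow> 'a) \<Rightarrow> nat \<Rightarrow> 'a" where
  "cc n k a b i = (if i = 0 then 1 else if i = n then b n
                   else k i * b i - k (i + 1) * a i)"

definition dd :: "(nat \<Rightarrow> 'a::field) \<Rightarrow> (nat \<Rightarrow> 'a) \<Rightarrow> (nat \<Rightarrow> 'a) \<Rightarrow> nat \<Rightarrow> 'a" where
  "dd k a b i = (if i = 0 then a 1
                 else k i * a (i + 1) * b i - k (i + 1) * a i * b (i + 1))"

definition ff :: "(nat \<Rightarrow> 'a::field) \<Rightarrow> (nat \<Rightarrow> 'a) \<Rightarrow> nat \<Rightarrow> 'a" where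
  "ff a b i = a i - b i"

definition gg :: "nat \<Rightarrow> (nat \<Rightarrow> 'a::field) \<Rightarrow> nat \<Rightarrow> 'a" where
  "gg n k i = (if i = n then 1 else k i - k (i + 1))"

definition alpha :: "nat \<Rightarrow> (nat \<Rightarrow> 'a::field) \<Rightarrow> (nat \<Rightarrow> 'a) \<Rightarrow> (nat \<Rightarrow> 'a) \<Rightarrow> nat \<Rightarrow> nat \<Rightarrow> 'a" where
  "alpha n k a b i j =
    (let c = cc n k a b in
     if i = j then
       (if i = 1 then 1 / c 1
        else if i = n then k (n - 1) * b (n - 1) / (k n * c (n - 1) * c n)
        else (k (i - 1) * b (i - 1) - k (i + 1) * a (i - 1)) / (c (i - 1) * c i))
     else if i > j then
       (-1) ^ (i + j) * (dd k a b (j - 1) * gg n k i *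
          (\<Prod>\<nu> \<in> {j + 1 .. i - 1}. k \<nu> * ff a b \<nu>))
         / (\<Prod>\<nu> \<in> {j - 1 .. i}. c \<nu>)
     else if j = i + 1 then - (1 / c i)
     else 0)"

definition A2inv :: "nat \<Rightarrow> (nat \<Rightarrow> 'a::field) \<Rightarrow> (nat \<Rightarrow> 'a) \<Rightarrow> (nat \<Rightarrow> 'a) \<Rightarrow> 'a mat" where
  "A2inv n k a b = mat n n (\<lambda>(i0, j0). alpha n k a b (i0 + 1) (j0 + 1))"

end

theory Submission
  imports Defs "Jordan_Normal_Form.Determinant"
begin

(* Check A2 * A2inv = 1 column by column. Above the diagonal, column j of the inverse has only the
   entry -1/c_{j-1}; below it, alpha_{lj} = d_{j-1} g_l h_j(l) with
   c_{l+1} h_j(l+1) = -k_l f_l h_j(l). Since a_l g_l = c_l + k_l f_l and b_l g_l = c_l + k_{l+1} f_l,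
   the part of the row-i sum below the diagonal telescopes to -d_{j-1} k_{max(i,j+1)} / (c_{j-1} c_j),
   and what is left is a polynomial identity in the parameters. A one-sided inverse of a square
   matrix over a field is two-sided. *)

definition A2_entry :: "(nat \<Rightarrow> 'a::field) \<Rightarrow> (nat \<Rightarrow> 'a) \<Rightarrow> (nat \<Rightarrow> 'a) \<Rightarrow> nat \<Rightarrow> nat \<Rightarrow> 'a" where
  "A2_entry k a b i l = (if i \<le> l then k l * b l else k i * a l)"

definition alpha_weight ::
    "nat \<Rightarrow> (nat \<Rightarrow> 'a::field) \<Rightarrow> (nat \<Rightarrow> 'a) \<Rightarrow> (nat \<Rightarrow> 'a) \<Rightarrow> nat \<Rightarrow> nat \<Rightarrow> 'a" where
  "alpha_weight n k a b j l = (-1) ^ (l + j) * (\<Prod>\<nu>\<in>{j + 1 .. l - 1}. k \<nu> * ff a b \<nu>)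
     / (\<Prod>\<nu>\<in>{j - 1 .. l}. cc n k a b \<nu>)"

lemma alpha_below_diag:
  "j < l \<Longrightarrow> alpha n k a b l j = dd k a b (j - 1) * gg n k l * alpha_weight n k a b j l"
  by (simp add: alpha_def alpha_weight_def Let_def)

lemma alpha_superdiag: "alpha n k a b l (Suc l) = - 1 / cc n k a b l"
  by (simp add: alpha_def Let_def)

lemma alpha_above_superdiag: "Suc l < j \<Longrightarrow> alpha n k a b l j = 0"
  by (simp add: alpha_def Let_def)

lemma a_mult_gg: "0 < l \<Longrightarrow> l < n \<Longrightarrow> a l * gg n k l = cc n k a b l + k l * ff a b l"
  by (simp add: cc_def gg_def ff_def algebra_simps)

lemma b_mult_gg: "0 < l \<Longrightarrow> l < n \<Longrightarrow> b l * gg n k l = cc n k a b l + k (Suc l) * ff a b l"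
  by (simp add: cc_def gg_def ff_def algebra_simps)

lemma first_column_identity:
  assumes "1 \<le> i" "2 \<le> n"
  shows "A2_entry k a b i 1 - a 1 * k (max i 2) = (if i = 1 then cc n k a b 1 else 0)"
proof (cases "i = 1")
  case False
  then have "max i 2 = i"
    using assms by simp
  with False assms show ?thesis
    by (simp add: A2_entry_def)
qed (use assms in \<open>simp add: A2_entry_def cc_def\<close>)

lemma middle_column_identity:
  assumes "1 < j" "j < n"
  shows "A2_entry k a b i j * (k (j - 1) * b (j - 1) - k (j + 1) * a (j - 1))
      - A2_entry k a b i (j - 1) * cc n k a b j - dd k a b (j - 1) * k (max i (j + 1))
    = (if i = j then cc n k a b (j - 1) * cc n k a b j else 0)"
proof -
  obtain m where m: "j = Suc m" "0 < m" "Suc m < n"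
    using assms by (cases j) auto
  consider "i \<le> m" | "i = j" | "j < i"
    using m by linarith
  then show ?thesis
    by cases (use m in \<open>auto simp: A2_entry_def cc_def dd_def max_absorb1 max_absorb2 algebra_simps\<close>)
qed

lemma last_column_identity:
  assumes "i \<le> n" "2 \<le> n"
  shows "k (n - 1) * b (n - 1) - A2_entry k a b i (n - 1) = (if i = n then cc n k a b (n - 1) else 0)"
  using assms by (auto simp: A2_entry_def cc_def)

lemma column_head_sum:
  assumes "0 < j"
  shows "(\<Sum>l\<in>{1..j}. A2_entry k a b i l * alpha n k a b l j)
    = (if j = 1 then 0 else - A2_entry k a b i (j - 1) / cc n k a b (j - 1))
      + A2_entry k a b i j * alpha n k a b j j"
proof -
  have "(\<Sum>l\<in>{1..<j}. A2_entry k a b i l * alpha n k a b l j)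
      = (if j = 1 then 0 else - A2_entry k a b i (j - 1) / cc n k a b (j - 1))"
  proof (cases "j = 1")
    case False
    then have "{1..<j} = insert (j - 1) {1..<j - 1}"
      using assms by auto
    moreover have "alpha n k a b (j - 1) j = - 1 / cc n k a b (j - 1)"
      using alpha_superdiag[of n k a b "j - 1"] False assms by simp
    moreover have "alpha n k a b l j = 0" if "l \<in> {1..<j - 1}" for l
      by (rule alpha_above_superdiag) (use that in auto)
    ultimately show ?thesis
      using False by simp
  qed simp
  then show ?thesis
    using assms by (simp add: sum.last_plus)
qed

lemma index_A2_mult_A2inv:
  assumes "i < n" "j < n"
  shows "(A2 n k a b * A2inv n k a b) $$ (i, j)
    = (\<Sum>l\<in>{1..n}. A2_entry k a b (Suc i) l * alpha n k a b l (Suc j))"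
  using assms by (simp add: A2_def A2inv_def A2_entry_def scalar_prod_def sum.atLeast1_atMost_eq
      atLeast0LessThan)

lemma A2_carrier: "A2 n k a b \<in> carrier_mat n n"
  by (simp add: A2_def)

lemma A2inv_carrier: "A2inv n k a b \<in> carrier_mat n n"
  by (simp add: A2inv_def)

lemma lower_hessenberg_A2inv: "lower_hessenberg (A2inv n k a b)"
  by (auto simp: lower_hessenberg_def A2inv_def alpha_def Let_def)

locale A2_nonsingular =
  fixes n :: nat and k a b :: "nat \<Rightarrow> 'a::field"
  assumes two_le_n: "2 \<le> n"
    and k_n_nonzero: "k n \<noteq> 0"
    and cc_nonzero: "\<forall>i\<in>{1..n}. cc n k a b i \<noteq> 0"
begin

abbreviation c :: "nat \<Rightarrow> 'a" where
  "c \<equiv> cc n k a b"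

abbreviation h :: "nat \<Rightarrow> nat \<Rightarrow> 'a" where
  "h \<equiv> alpha_weight n k a b"

lemma c_nonzero: "v \<le> n \<Longrightarrow> c v \<noteq> 0"
  using cc_nonzero by (cases "v = 0") (auto simp: cc_def)

lemma alpha_weight_Suc:
  assumes "j < l" "l < n"
  shows "c (Suc l) * h j (Suc l) = - (k l * ff a b l * h j l)"
proof -
  have "{j + 1 .. Suc l - 1} = insert l {j + 1 .. l - 1}" "{j - 1 .. Suc l} = insert (Suc l) {j - 1 .. l}"
    using assms by auto
  moreover have "l \<notin> {j + 1 .. l - 1}" "Suc l \<notin> {j - 1 .. l}"
    by auto
  moreover have "c (Suc l) \<noteq> 0" "(\<Prod>\<nu>\<in>{j - 1 .. l}. c \<nu>) \<noteq> 0"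
    using assms by (auto simp: c_nonzero)
  ultimately show ?thesis
    by (simp add: alpha_weight_def field_simps)
qed

lemma alpha_weight_first:
  assumes "0 < j" "j < n"
  shows "c (Suc j) * h j (Suc j) = - 1 / (c (j - 1) * c j)"
proof -
  obtain m where "j = Suc m"
    using assms by (cases j) auto
  then have "(\<Prod>\<nu>\<in>{j - 1 .. Suc j}. c \<nu>) = c (j - 1) * c j * c (Suc j)"
    by (simp add: atLeastAtMostSuc_conv)
  moreover have "c (j - 1) \<noteq> 0" "c j \<noteq> 0" "c (Suc j) \<noteq> 0"
    using assms by (auto simp: c_nonzero)
  ultimately show ?thesis
    using assms by (simp add: alpha_weight_def field_simps)
qed

lemma column_tail_term_telescopes:
  fixes i :: nat
  assumes "j < l" "l < n"
  defines "\<Phi> \<equiv> \<lambda>l. k (max i l) * c l * h j l"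
  \<comment> \<open>one potential for both row shapes: entries k_i a_l for l < i and k_l b_l for l \<ge> i\<close>
  shows "A2_entry k a b i l * gg n k l * h j l = \<Phi> l - \<Phi> (Suc l)"
proof -
  have next_term: "\<Phi> (Suc l) = - k (max i (Suc l)) * (k l * ff a b l * h j l)"
    using alpha_weight_Suc[OF assms(1,2)] by (simp add: \<Phi>_def mult.assoc)
  have this_term: "\<Phi> l = k (max i l) * c l * h j l"
    by (simp add: \<Phi>_def)
  show ?thesis
  proof (cases "i \<le> l")
    case True
    then have "A2_entry k a b i l * gg n k l = k l * (c l + k (Suc l) * ff a b l)"
      using assms(1,2) by (simp add: A2_entry_def b_mult_gg mult.assoc)
    with True show ?thesis
      by (simp add: next_term this_term max_absorb2 algebra_simps)
  next
    case False
    then have "A2_entry k a b i l * gg n k l = k i * (c l + k l * ff a b l)"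
      using assms(1,2) by (simp add: A2_entry_def a_mult_gg mult.assoc)
    with False show ?thesis
      by (simp add: next_term this_term max_absorb1 algebra_simps)
  qed
qed

lemma column_tail_sum:
  assumes "0 < j" "j < n" "i \<le> n"
  shows "(\<Sum>l\<in>{Suc j..n}. A2_entry k a b i l * alpha n k a b l j)
    = - dd k a b (j - 1) * k (max i (Suc j)) / (c (j - 1) * c j)"
proof -
  define \<Phi> where "\<Phi> l = k (max i l) * c l * h j l" for l
  have "(\<Sum>l\<in>{Suc j..n}. A2_entry k a b i l * alpha n k a b l j)
      = dd k a b (j - 1) * (\<Sum>l\<in>{Suc j..n}. A2_entry k a b i l * gg n k l * h j l)"
    unfolding sum_distrib_left by (rule sum.cong) (auto simp: alpha_below_diag ac_simps)
  also have "(\<Sum>l\<in>{Suc j..n}. A2_entry k a b i l * gg n k l * h j l)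
      = (\<Sum>l\<in>{Suc j..<n}. \<Phi> l - \<Phi> (Suc l)) + \<Phi> n"
  proof -
    have "A2_entry k a b i n * gg n k n * h j n = \<Phi> n"
      using assms two_le_n by (simp add: A2_entry_def gg_def cc_def \<Phi>_def max_absorb2)
    moreover have "(\<Sum>l\<in>{Suc j..<n}. A2_entry k a b i l * gg n k l * h j l)
        = (\<Sum>l\<in>{Suc j..<n}. \<Phi> l - \<Phi> (Suc l))"
      by (rule sum.cong) (auto simp: \<Phi>_def column_tail_term_telescopes)
    ultimately show ?thesis
      using assms by (simp add: sum.last_plus)
  qed
  also have "\<dots> = \<Phi> (Suc j)"
    using sum_Suc_diff'[of "Suc j" n \<Phi>] assms by (simp add: sum_subtractf algebra_simps)
  also have "\<dots> = - k (max i (Suc j)) / (c (j - 1) * c j)"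
    using alpha_weight_first[OF assms(1,2)] by (simp add: \<Phi>_def mult.assoc)
  finally show ?thesis
    by simp
qed

lemma column_sum_first:
  assumes "1 \<le> i" "i \<le> n"
  shows "(\<Sum>l\<in>{1..n}. A2_entry k a b i l * alpha n k a b l 1) = (if i = 1 then 1 else 0)"
proof -
  have "(\<Sum>l\<in>{1..n}. A2_entry k a b i l * alpha n k a b l 1)
      = A2_entry k a b i 1 / c 1 - a 1 * k (max i 2) / c 1"
    using column_tail_sum[of 1 i] assms two_le_n
    by (simp add: sum.atLeast_Suc_atMost alpha_def dd_def cc_def numeral_2_eq_2)
  also have "\<dots> = (A2_entry k a b i 1 - a 1 * k (max i 2)) / c 1"
    by (simp add: diff_divide_distrib)
  also have "\<dots> = (if i = 1 then c 1 else 0) / c 1"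
    by (simp only: first_column_identity[OF assms(1) two_le_n])
  finally show ?thesis
    using c_nonzero[of 1] two_le_n by simp
qed

lemma column_sum_middle:
  assumes "1 < j" "j < n" "i \<le> n"
  shows "(\<Sum>l\<in>{1..n}. A2_entry k a b i l * alpha n k a b l j) = (if i = j then 1 else 0)"
proof -
  have nonzero: "c (j - 1) \<noteq> 0" "c j \<noteq> 0"
    using assms by (auto simp: c_nonzero)
  have diagonal: "alpha n k a b j j
      = (k (j - 1) * b (j - 1) - k (j + 1) * a (j - 1)) / (c (j - 1) * c j)"
    using assms by (simp add: alpha_def Let_def)
  have "(\<Sum>l\<in>{1..n}. A2_entry k a b i l * alpha n k a b l j)
      = (\<Sum>l\<in>{1..j}. A2_entry k a b i l * alpha n k a b l j)
        + (\<Sum>l\<in>{Suc j..n}. A2_entry k a b i l * alpha n k a b l j)"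
    using sum.ub_add_nat[of 1 j _ "n - j"] assms by simp
  also have "\<dots> = - A2_entry k a b i (j - 1) / c (j - 1)
      + A2_entry k a b i j * (k (j - 1) * b (j - 1) - k (j + 1) * a (j - 1)) / (c (j - 1) * c j)
      - dd k a b (j - 1) * k (max i (Suc j)) / (c (j - 1) * c j)"
    using column_head_sum[of j k a b i n] column_tail_sum[of j i] assms by (simp add: diagonal)
  also have "\<dots> = (A2_entry k a b i j * (k (j - 1) * b (j - 1) - k (j + 1) * a (j - 1))
      - A2_entry k a b i (j - 1) * c j - dd k a b (j - 1) * k (max i (j + 1))) / (c (j - 1) * c j)"
    using nonzero by (simp add: field_simps)
  also have "\<dots> = (if i = j then c (j - 1) * c j else 0) / (c (j - 1) * c j)"
    by (simp only: middle_column_identity[OF assms(1,2)])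
  finally show ?thesis
    using nonzero by simp
qed

lemma column_sum_last:
  assumes "i \<le> n"
  shows "(\<Sum>l\<in>{1..n}. A2_entry k a b i l * alpha n k a b l n) = (if i = n then 1 else 0)"
proof -
  have nonzero: "c (n - 1) \<noteq> 0" "b n \<noteq> 0"
    using c_nonzero[of "n - 1"] c_nonzero[of n] two_le_n by (auto simp: cc_def)
  have "(\<Sum>l\<in>{1..n}. A2_entry k a b i l * alpha n k a b l n)
      = - A2_entry k a b i (n - 1) / c (n - 1)
        + k n * b n * (k (n - 1) * b (n - 1) / (k n * c (n - 1) * b n))"
  proof -
    have "alpha n k a b n n = k (n - 1) * b (n - 1) / (k n * c (n - 1) * b n)"
      using two_le_n by (simp add: alpha_def Let_def cc_def)
    moreover have "A2_entry k a b i n = k n * b n"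
      using assms by (simp add: A2_entry_def)
    ultimately show ?thesis
      using column_head_sum[of n k a b i n] two_le_n by simp
  qed
  also have "\<dots> = (k (n - 1) * b (n - 1) - A2_entry k a b i (n - 1)) / c (n - 1)"
    using nonzero k_n_nonzero by (simp add: field_simps)
  also have "\<dots> = (if i = n then c (n - 1) else 0) / c (n - 1)"
    by (simp only: last_column_identity[OF assms two_le_n])
  finally show ?thesis
    using nonzero by simp
qed

lemma column_sum:
  assumes "1 \<le> i" "i \<le> n" "1 \<le> j" "j \<le> n"
  shows "(\<Sum>l\<in>{1..n}. A2_entry k a b i l * alpha n k a b l j) = (if i = j then 1 else 0)"
proof -
  consider "j = 1" | "1 < j" "j < n" | "j = n"
    using assms by linarith
  then show ?thesis
    by cases (use assms column_sum_first column_sum_middle column_sum_last in auto)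
qed

lemma A2_mult_A2inv: "A2 n k a b * A2inv n k a b = 1\<^sub>m n"
proof (rule eq_matI)
  fix i j
  assume "i < dim_row (1\<^sub>m n :: 'a mat)" "j < dim_col (1\<^sub>m n :: 'a mat)"
  then show "(A2 n k a b * A2inv n k a b) $$ (i, j) = 1\<^sub>m n $$ (i, j)"
    using column_sum[of "Suc i" "Suc j"] by (simp add: index_A2_mult_A2inv)
qed (simp_all add: A2_def A2inv_def)

end

theorem mainTheorem3:
  fixes n :: nat and k a b :: "nat \<Rightarrow> 'a :: real_normed_field"
  assumes "n \<ge> 2"
    and "k n \<noteq> 0"
    and "\<forall>i \<in> {1..n}. cc n k a b i \<noteq> 0"
  shows "invertible_mat (A2 n k a b)
       \<and> inverts_mat (A2 n k a b) (A2inv n k a b)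
       \<and> inverts_mat (A2inv n k a b) (A2 n k a b)
       \<and> lower_hessenberg (A2inv n k a b)"
proof -
  interpret A2_nonsingular n k a b
    using assms by unfold_locales
  have right: "A2 n k a b * A2inv n k a b = 1\<^sub>m n"
    by (rule A2_mult_A2inv)
  then have left: "A2inv n k a b * A2 n k a b = 1\<^sub>m n"
    by (rule mat_mult_left_right_inverse[OF A2_carrier A2inv_carrier])
  have "inverts_mat (A2 n k a b) (A2inv n k a b)" "inverts_mat (A2inv n k a b) (A2 n k a b)"
    using right left by (simp_all add: inverts_mat_def A2_def A2inv_def)
  moreover have "invertible_mat (A2 n k a b)"
    using calculation by (auto simp: invertible_mat_def A2_def)
  ultimately show ?thesis
    using lower_hessenberg_A2inv by blast
qed

end
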